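(* Let $(X,\rho)$ be a metric space, $A\in CL(X)$ and $(A_k)\subset CL(X)$. If $f\colon[0,\infty)\to[0,\infty)$ is a modulus such that $\beta:=\lim_{t\to\infty}\frac{f(t)}{t}>0$ and $(A_k)$ is Wijsman strongly Cesàro summable to $A$ with respect to $f$, then $(A_k)$ is Wijsman strongly Cesàro summable to $A$.
   Context: A modulus is a function $f\colon[0,\infty)\to[0,\infty)$ such that $f(x)=0$ iff $x=0$, $f$ is subadditive, increasing and continuous (for such $f$ the limit $\lim_{t\to\infty}f(t)/t$ exists and is finite). $CL(X)$ denotes the set of all non-empty closed subsets of $(X,\rho)$, and $d(x,B)=\inf_{y\in B}\rho(x,y)$. $(A_k)$ is Wijsman strongly Cesàro summable to $A$ if $\lim_{n\to\infty}\frac1n\sum_{k=1}^n|d(x,A_k)-d(x,A)|=0$ for every $x\in X$; it is Wijsman strongly Cesàro summable to $A$ with respect to $f$ if $\lim_{n\to\infty}\frac1n\sum_{k=1}^n f(|d(x,A_k)-d(x,A)|)=0$ for every $x\in X$. *)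

theory Defs
  imports "HOL-Analysis.Analysis"
begin

text \<open>A modulus: a function on [0,\<infinity>) (represented as real => real, only its
values on [0,\<infinity>) matter) with values in [0,\<infinity>), vanishing exactly at 0,
subadditive, increasing and continuous.\<close>
definition modulus :: "(real \<Rightarrow> real) \<Rightarrow> bool" where
  "modulus f \<longleftrightarrow>
     (\<forall>x\<ge>0. f x \<ge> 0) \<and>
     (\<forall>x\<ge>0. f x = 0 \<longleftrightarrow> x = 0) \<and>
     (\<forall>x\<ge>0. \<forall>y\<ge>0. f (x + y) \<le> f x + f y) \<and>
     mono_on {0..} f \<and>
     continuous_on {0..} f"

definition CL :: "'a::metric_space set set" where
  "CL = {A. A \<noteq> {} \<and> closed A}"

definition wijsman_strongly_cesaro :: "(nat \<Rightarrow> 'a::metric_space set) \<Rightarrow> 'a set \<Rightarrow> bool" where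
  "wijsman_strongly_cesaro Ak A \<longleftrightarrow>
     (\<forall>x. (\<lambda>n. (1 / real n) * (\<Sum>k=1..n. \<bar>infdist x (Ak k) - infdist x A\<bar>)) \<longlonglongrightarrow> 0)"

definition wijsman_strongly_cesaro_mod ::
    "(real \<Rightarrow> real) \<Rightarrow> (nat \<Rightarrow> 'a::metric_space set) \<Rightarrow> 'a set \<Rightarrow> bool" where
  "wijsman_strongly_cesaro_mod f Ak A \<longleftrightarrow>
     (\<forall>x. (\<lambda>n. (1 / real n) * (\<Sum>k=1..n. f \<bar>infdist x (Ak k) - infdist x A\<bar>)) \<longlonglongrightarrow> 0)"

end

theory Submission
  imports Defs
begin

text \<open>By subadditivity \<open>f (n t) \<le> n f t\<close>, so \<open>f t / t\<close> dominates \<open>f (n t) / (n t)\<close>, whose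
limit is \<open>\<beta>\<close>; hence \<open>\<beta> t \<le> f t\<close> for every \<open>t \<ge> 0\<close>. Each term \<open>\<bar>d(x,A\<^sub>k) - d(x,A)\<bar>\<close> is
therefore at most \<open>1/\<beta>\<close> times its image under \<open>f\<close>, and the Cesaro means inherit this bound.\<close>

lemma modulus_mult_le:
  assumes "modulus f" "t \<ge> 0"
  shows "f (real n * t) \<le> real n * f t"
proof (induction n)
  case 0
  then show ?case using assms unfolding modulus_def by auto
next
  case (Suc n)
  have "f (real (Suc n) * t) = f (real n * t + t)" by (simp add: algebra_simps)
  also have "\<dots> \<le> f (real n * t) + f t" using assms unfolding modulus_def by auto
  also have "\<dots> \<le> real (Suc n) * f t" using Suc by (simp add: algebra_simps)
  finally show ?case .
qed

lemma modulus_ge_linear: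
  assumes "modulus f" "((\<lambda>t. f t / t) \<longlongrightarrow> \<beta>) at_top" "t \<ge> 0"
  shows "\<beta> * t \<le> f t"
proof (cases "t = 0")
  case True
  then show ?thesis using assms(1) unfolding modulus_def by auto
next
  case False
  with assms(3) have "t > 0" by simp
  have "filterlim (\<lambda>n. real n * t) at_top sequentially"
    by (rule filterlim_at_top_mult_tendsto_pos[OF tendsto_const \<open>t > 0\<close> filterlim_real_sequentially])
  hence "(\<lambda>n. f (real n * t) / (real n * t)) \<longlonglongrightarrow> \<beta>"
    using filterlim_compose[OF assms(2)] by (auto simp: o_def)
  moreover have "f (real n * t) / (real n * t) \<le> f t / t" if "n \<ge> 1" for n :: nat
    using modulus_mult_le[OF assms(1) assms(3), of n] \<open>t > 0\<close> that
    by (simp add: divide_simps) (simp add: mult.commute mult.left_commute)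
  ultimately have "\<beta> \<le> f t / t" by (intro LIMSEQ_le_const2) auto
  thus ?thesis using \<open>t > 0\<close> by (simp add: field_simps)
qed

lemma cesaro_mean_tendsto_zero_if_dominated:
  fixes a b :: "nat \<Rightarrow> real"
  assumes "\<beta> > 0" and "\<And>k. 0 \<le> a k" and "\<And>k. \<beta> * a k \<le> b k"
    and "(\<lambda>n. (1 / real n) * (\<Sum>k=1..n. b k)) \<longlonglongrightarrow> 0"
  shows "(\<lambda>n. (1 / real n) * (\<Sum>k=1..n. a k)) \<longlonglongrightarrow> 0"
proof (rule tendsto_sandwich[OF _ _ tendsto_const tendsto_divide_zero[OF assms(4), of \<beta>]])
  show "\<forall>\<^sub>F n in sequentially. 0 \<le> (1 / real n) * (\<Sum>k=1..n. a k)"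
    using assms(2) by (intro always_eventually allI mult_nonneg_nonneg sum_nonneg) auto
  show "\<forall>\<^sub>F n in sequentially. (1 / real n) * (\<Sum>k=1..n. a k) \<le> (1 / real n) * (\<Sum>k=1..n. b k) / \<beta>"
  proof (intro always_eventually allI)
    fix n
    have "\<beta> * (\<Sum>k=1..n. a k) \<le> (\<Sum>k=1..n. b k)"
      unfolding sum_distrib_left by (intro sum_mono assms(3))
    hence "(\<Sum>k=1..n. a k) \<le> (\<Sum>k=1..n. b k) / \<beta>"
      using assms(1) by (simp add: field_simps)
    thus "(1 / real n) * (\<Sum>k=1..n. a k) \<le> (1 / real n) * (\<Sum>k=1..n. b k) / \<beta>"
      by (metis mult_left_mono of_nat_0_le_iff divide_nonneg_nonneg zero_le_one times_divide_eq_right)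
  qed
qed

theorem theorem4p6:
  fixes A :: "'a::metric_space set" and Ak :: "nat \<Rightarrow> 'a set"
    and f :: "real \<Rightarrow> real" and \<beta> :: real
  assumes "A \<in> CL" and "\<And>k. Ak k \<in> CL"
    and "modulus f"
    and "((\<lambda>t. f t / t) \<longlongrightarrow> \<beta>) at_top" and "\<beta> > 0"
    and "wijsman_strongly_cesaro_mod f Ak A"
  shows "wijsman_strongly_cesaro Ak A"
  unfolding wijsman_strongly_cesaro_def
proof
  fix x
  show "(\<lambda>n. (1 / real n) * (\<Sum>k=1..n. \<bar>infdist x (Ak k) - infdist x A\<bar>)) \<longlonglongrightarrow> 0"
  proof (rule cesaro_mean_tendsto_zero_if_dominated[OF \<open>\<beta> > 0\<close>])
    show "\<beta> * \<bar>infdist x (Ak k) - infdist x A\<bar> \<le> f \<bar>infdist x (Ak k) - infdist x A\<bar>" for k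
      using modulus_ge_linear[OF assms(3,4)] by simp
    show "(\<lambda>n. (1 / real n) * (\<Sum>k=1..n. f \<bar>infdist x (Ak k) - infdist x A\<bar>)) \<longlonglongrightarrow> 0"
      using assms(6) unfolding wijsman_strongly_cesaro_mod_def by blast
  qed simp
qed

end
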